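(* Let $(X,d)$ be a compact metric space and $(X,f)$ a flow or semiflow that has the weak reparametrized gluing orbit property and is not minimal. Then there exist $z\in X$, $\epsilon>0$ and $\tau>0$ such that $d(f^t(z),z)\ge\epsilon$ for every $t\ge\tau$.
   Context: A flow (resp. semiflow) on $X$ is a continuous family $\{f^t\}$ of continuous maps $X\to X$ indexed by $t\in\mathbb{R}$ (resp. $t\in[0,\infty)$) with $f^0=\mathrm{id}$ and $f^{t+s}=f^t\circ f^s$. $(X,f)$ is minimal if for every $x\in X$ the forward orbit $\{f^t(x):t\ge 0\}$ is dense in $X$. For $L\ge 1$, an $L$-reparametrization is a strictly increasing continuous function $\gamma:[0,\infty)\to[0,\infty)$ with $\gamma(0)=0$ and $L^{-1}\le \frac{\gamma(t_1)-\gamma(t_2)}{t_1-t_2}\le L$ for all $t_1\ne t_2$ in $[0,\infty)$. An orbit sequence of rank $k$ is a finite sequence $\mathscr{C}=\{(x_j,m_j)\in X\times[0,\infty):j=1,\dots,k\}$. A gap for it is a $(k-1)$-tuple $\mathscr{g}=\{t_j\in[0,\infty):j=1,\dots,k-1\}$. Given a reparametrization $\gamma$ and $\epsilon>0$, $(\mathscr{C},\mathscr{g},\gamma)$ is $\epsilon$-shadowed by $z\in X$ if for every $j=1,\dots,k$ and every $t\in[0,m_j]$ one has $d(f^{\gamma(s_j+t)}(z),f^t(x_j))<\epsilon$, where $s_1=0$ and $s_j=\sum_{i=1}^{j-1}(m_i+t_i)$ for $j\ge2$. $(X,f)$ has the weak reparametrized gluing orbit property if for every $\epsilon>0$ there is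 $M=M(\epsilon)>0$ such that for every orbit sequence $\mathscr{C}$ there exist a gap $\mathscr{g}$ with $\max\mathscr{g}\le M$ and an $M$-reparametrization $\gamma$ such that $(\mathscr{C},\mathscr{g},\gamma)$ is $\epsilon$-shadowed by some point of $X$. *)

theory Defs
  imports "HOL-Analysis.Analysis"
begin

definition is_semiflow :: "'a::metric_space set \<Rightarrow> (real \<Rightarrow> 'a \<Rightarrow> 'a) \<Rightarrow> bool" where
  "is_semiflow X f \<longleftrightarrow>
     continuous_on ({0..} \<times> X) (\<lambda>(t, x). f t x) \<and>
     (\<forall>t\<ge>0. \<forall>x\<in>X. f t x \<in> X) \<and>
     (\<forall>x\<in>X. f 0 x = x) \<and>
     (\<forall>t\<ge>0. \<forall>s\<ge>0. \<forall>x\<in>X. f (t + s) x = f t (f s x))"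

definition is_flow :: "'a::metric_space set \<Rightarrow> (real \<Rightarrow> 'a \<Rightarrow> 'a) \<Rightarrow> bool" where
  "is_flow X f \<longleftrightarrow>
     continuous_on (UNIV \<times> X) (\<lambda>(t, x). f t x) \<and>
     (\<forall>t. \<forall>x\<in>X. f t x \<in> X) \<and>
     (\<forall>x\<in>X. f 0 x = x) \<and>
     (\<forall>t s. \<forall>x\<in>X. f (t + s) x = f t (f s x))"

definition minimal :: "'a::metric_space set \<Rightarrow> (real \<Rightarrow> 'a \<Rightarrow> 'a) \<Rightarrow> bool" where
  "minimal X f \<longleftrightarrow> (\<forall>x\<in>X. X \<subseteq> closure {f t x | t. t \<ge> 0})"

definition reparametrization :: "real \<Rightarrow> (real \<Rightarrow> real) \<Rightarrow> bool" where
  "reparametrization L \<gamma> \<longleftrightarrow>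
     L \<ge> 1 \<and> strict_mono_on {0..} \<gamma> \<and> continuous_on {0..} \<gamma> \<and> \<gamma> 0 = 0 \<and>
     (\<forall>t\<ge>0. \<gamma> t \<ge> 0) \<and>
     (\<forall>t1\<ge>0. \<forall>t2\<ge>0. t1 \<noteq> t2 \<longrightarrow>
        1 / L \<le> (\<gamma> t1 - \<gamma> t2) / (t1 - t2) \<and> (\<gamma> t1 - \<gamma> t2) / (t1 - t2) \<le> L)"

text \<open>Orbit sequence of rank k: points x j and lengths m j for j < k (0-indexed);
  gap g j for j < k - 1; starting times s j = \<Sum>i<j. (m i + g i).\<close>
definition shadowed ::
  "(real \<Rightarrow> 'a::metric_space \<Rightarrow> 'a) \<Rightarrow> nat \<Rightarrow> (nat \<Rightarrow> 'a) \<Rightarrow> (nat \<Rightarrow> real) \<Rightarrow>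
   (nat \<Rightarrow> real) \<Rightarrow> (real \<Rightarrow> real) \<Rightarrow> real \<Rightarrow> 'a \<Rightarrow> bool" where
  "shadowed f k x m g \<gamma> \<epsilon> z \<longleftrightarrow>
     (\<forall>j<k. \<forall>t\<in>{0..m j}.
        dist (f (\<gamma> ((\<Sum>i<j. m i + g i) + t)) z) (f t (x j)) < \<epsilon>)"

definition weak_reparam_gluing :: "'a::metric_space set \<Rightarrow> (real \<Rightarrow> 'a \<Rightarrow> 'a) \<Rightarrow> bool" where
  "weak_reparam_gluing X f \<longleftrightarrow>
     (\<forall>\<epsilon>>0. \<exists>M>0. \<forall>k::nat. \<forall>x m. k \<ge> 1 \<longrightarrow> (\<forall>j<k. x j \<in> X \<and> m j \<ge> 0) \<longrightarrow>
        (\<exists>g \<gamma> z. (\<forall>j<k - 1. 0 \<le> g j \<and> g j \<le> M) \<and> reparametrization M \<gamma> \<and>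
                 z \<in> X \<and> shadowed f k x m g \<gamma> \<epsilon> z))"

end

theory Submission
  imports Defs
begin

text \<open>By non-minimality some point y lies outside the closure of the forward orbit of some x,
  so an e-ball around y is never visited by that orbit. Gluing a trivial orbit segment at y to an
  arbitrarily long segment of the orbit of x gives points z near y whose orbits stay
  away from y during a long time window starting at a time bounded by the gluing
  constant. A limit point of such z stays near y, yet its orbit avoids a neighbourhood
  of y for all large times, so it never returns close to itself.\<close>

lemma flow_or_semiflow_continuous_on:
  fixes f :: "real \<Rightarrow> 'a::metric_space \<Rightarrow> 'a"
  assumes "is_flow X f \<or> is_semiflow X f" and "s \<ge> 0"
  shows "continuous_on X (f s)"
proof -
  have "continuous_on ({0..} \<times> X) (\<lambda>(t, x). f t x)"
    using assms(1) unfolding is_flow_def is_semiflow_def by (auto intro: continuous_on_subset)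
  then have "continuous_on X ((\<lambda>(t, x). f t x) \<circ> (\<lambda>x. (s, x)))"
    by (rule continuous_on_compose[rotated, OF continuous_on_subset])
       (use assms(2) in \<open>auto intro!: continuous_intros\<close>)
  then show ?thesis by (simp add: o_def)
qed

lemma flow_or_semiflow_at_0:
  assumes "is_flow X f \<or> is_semiflow X f" and "x \<in> X"
  shows "f 0 x = x"
  using assms unfolding is_flow_def is_semiflow_def by auto

lemma reparametrization_bounds:
  assumes "reparametrization L \<gamma>" and "t \<ge> 0"
  shows "t / L \<le> \<gamma> t" and "\<gamma> t \<le> L * t"
proof -
  have L: "L \<ge> 1" and \<gamma>0: "\<gamma> 0 = 0"
    using assms(1) unfolding reparametrization_def by auto
  have "t / L \<le> \<gamma> t \<and> \<gamma> t \<le> L * t"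
  proof (cases "t = 0")
    case False
    then have "t > 0" using assms(2) by simp
    moreover have "1 / L \<le> \<gamma> t / t \<and> \<gamma> t / t \<le> L"
      using assms \<gamma>0 False unfolding reparametrization_def by force
    ultimately show ?thesis
      using L by (simp add: divide_le_eq le_divide_eq field_simps)
  qed (simp add: \<gamma>0)
  then show "t / L \<le> \<gamma> t" and "\<gamma> t \<le> L * t" by auto
qed

lemma reparametrization_hits:
  assumes "reparametrization L \<gamma>" and "0 \<le> a" "a \<le> b" "L * a \<le> s" "s \<le> b / L"
  obtains t where "a \<le> t" "t \<le> b" "\<gamma> t = s"
proof -
  have "\<gamma> a \<le> s" "s \<le> \<gamma> b"
    using reparametrization_bounds[OF assms(1)] assms(2-5) by (auto intro: order_trans)
  moreover have "continuous_on {a..b} \<gamma>"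
    using assms(1,2) unfolding reparametrization_def by (auto intro: continuous_on_subset)
  ultimately show ?thesis
    using IVT'[of \<gamma> a s b] assms(3) that by auto
qed

text \<open>The orbit sequence is (y, 0), (x, M T): the shadowing point starts near y and, after
  the gap and the reparametrization (both controlled by M), follows the orbit of x.\<close>
lemma weak_reparam_gluing_escape:
  fixes f :: "real \<Rightarrow> 'a::metric_space \<Rightarrow> 'a"
  assumes glue: "weak_reparam_gluing X f" and id0: "\<forall>x\<in>X. f 0 x = x"
    and "x \<in> X" "y \<in> X" and avoid: "\<forall>t\<ge>0. e \<le> dist (f t x) y" and "\<epsilon> > 0"
  obtains M where "M > 0"
    "\<And>T. T \<ge> 0 \<Longrightarrow> \<exists>z\<in>X. dist z y < \<epsilon> \<and> (\<forall>s. M * M \<le> s \<and> s \<le> T \<longrightarrow> e - \<epsilon> \<le> dist (f s z) y)"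
proof -
  obtain M where M: "M > 0" and glueM: "\<And>k xs ms. k \<ge> 1 \<Longrightarrow> (\<forall>j<k. xs j \<in> X \<and> ms j \<ge> 0) \<Longrightarrow>
      \<exists>g \<gamma> z. (\<forall>j<k - 1. 0 \<le> g j \<and> g j \<le> M) \<and> reparametrization M \<gamma> \<and>
               z \<in> X \<and> shadowed f k xs ms g \<gamma> \<epsilon> z"
    using glue \<open>\<epsilon> > 0\<close> unfolding weak_reparam_gluing_def by blast
  have "\<exists>z\<in>X. dist z y < \<epsilon> \<and> (\<forall>s. M * M \<le> s \<and> s \<le> T \<longrightarrow> e - \<epsilon> \<le> dist (f s z) y)"
    if "T \<ge> 0" for T
  proof -
    define xs where "xs = (\<lambda>j::nat. if j = 0 then y else x)"
    define ms where "ms = (\<lambda>j::nat. if j = 0 then 0 else M * T)"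
    have "\<forall>j<2. xs j \<in> X \<and> ms j \<ge> 0"
      using \<open>x \<in> X\<close> \<open>y \<in> X\<close> M \<open>T \<ge> 0\<close> by (simp add: xs_def ms_def)
    then obtain g \<gamma> z where g: "0 \<le> g 0" "g 0 \<le> M" and \<gamma>: "reparametrization M \<gamma>"
      and "z \<in> X" and sh: "shadowed f 2 xs ms g \<gamma> \<epsilon> z"
      using glueM[of 2 xs ms] by auto
    have "dist (f (\<gamma> 0) z) (f 0 y) < \<epsilon>"
      using sh unfolding shadowed_def by (auto simp: xs_def ms_def dest: spec[of _ 0])
    then have near: "dist z y < \<epsilon>"
      using \<gamma> id0 \<open>z \<in> X\<close> \<open>y \<in> X\<close> unfolding reparametrization_def by auto
    have follow: "dist (f (\<gamma> (g 0 + t)) z) (f t x) < \<epsilon>" if "0 \<le> t" "t \<le> M * T" for t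
      using sh that unfolding shadowed_def by (auto simp: xs_def ms_def dest!: spec[of _ 1])
    have "e - \<epsilon> \<le> dist (f s z) y" if s: "M * M \<le> s" "s \<le> T" for s
    proof -
      have "M * g 0 \<le> s" using g M s by (smt (verit) mult_left_mono)
      moreover have "M * s \<le> M * T" using M s by simp
      then have "s * M \<le> g 0 + M * T" using g by (simp add: mult.commute)
      then have "s \<le> (g 0 + M * T) / M" using M by (simp add: le_divide_eq)
      ultimately obtain t where t: "g 0 \<le> t" "t \<le> g 0 + M * T" "\<gamma> t = s"
        using reparametrization_hits[OF \<gamma>, of "g 0" "g 0 + M * T" s] g M \<open>T \<ge> 0\<close> by auto
      have "dist (f s z) (f (t - g 0) x) < \<epsilon>" using follow[of "t - g 0"] t by auto
      moreover have "e \<le> dist (f (t - g 0) x) y" using avoid t by auto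
      ultimately show ?thesis using dist_triangle[of "f (t - g 0) x" y "f s z"]
        by (simp add: dist_commute)
    qed
    then show ?thesis using \<open>z \<in> X\<close> near by blast
  qed
  then show ?thesis using M that by blast
qed

lemma compact_escaping_limit_point:
  fixes f :: "real \<Rightarrow> 'a::metric_space \<Rightarrow> 'a"
  assumes "compact X" and cont: "\<And>s. s \<ge> \<tau> \<Longrightarrow> continuous_on X (f s)"
    and escape: "\<And>n::nat. \<exists>z\<in>X. dist z y \<le> r \<and> (\<forall>s. \<tau> \<le> s \<and> s \<le> real n \<longrightarrow> \<delta> \<le> dist (f s z) y)"
  obtains l where "l \<in> X" "dist l y \<le> r" "\<And>s. s \<ge> \<tau> \<Longrightarrow> \<delta> \<le> dist (f s l) y"
proof -
  obtain zs where zs: "\<And>n. zs n \<in> X" "\<And>n. dist (zs n) y \<le> r"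
    "\<And>n s. \<tau> \<le> s \<Longrightarrow> s \<le> real n \<Longrightarrow> \<delta> \<le> dist (f s (zs n)) y"
    using escape by metis
  obtain l \<rho> where "l \<in> X" and \<rho>: "strict_mono \<rho>" and lim: "(zs \<circ> \<rho>) \<longlonglongrightarrow> l"
    using compact_imp_seq_compact[OF assms(1)] zs(1) unfolding seq_compact_def by metis
  have "dist l y \<le> r"
    using LIMSEQ_le_const2[OF tendsto_dist[OF lim tendsto_const]] zs(2) by auto
  moreover have "\<delta> \<le> dist (f s l) y" if "s \<ge> \<tau>" for s
  proof -
    have "(\<lambda>n. f s ((zs \<circ> \<rho>) n)) \<longlonglongrightarrow> f s l"
      using continuous_on_tendsto_compose[OF cont[OF that] lim \<open>l \<in> X\<close>] zs(1) by auto
    moreover obtain N :: nat where "s \<le> real N" using real_arch_simple by blast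
    then have "\<forall>n\<ge>N. \<delta> \<le> dist (f s ((zs \<circ> \<rho>) n)) y"
      using zs(3)[OF that] seq_suble[OF \<rho>] by (smt (verit) comp_apply of_nat_mono order_trans)
    ultimately show ?thesis
      using LIMSEQ_le_const[OF tendsto_dist[OF _ tendsto_const]] by blast
  qed
  ultimately show ?thesis using \<open>l \<in> X\<close> that by blast
qed

theorem lemma3p1:
  fixes X :: "'a::metric_space set" and f :: "real \<Rightarrow> 'a \<Rightarrow> 'a"
  assumes "compact X"
    and "is_flow X f \<or> is_semiflow X f"
    and "weak_reparam_gluing X f"
    and "\<not> minimal X f"
  shows "\<exists>z\<in>X. \<exists>\<epsilon>>0. \<exists>\<tau>>0. \<forall>t\<ge>\<tau>. dist (f t z) z \<ge> \<epsilon>"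
proof -
  obtain x y where "x \<in> X" "y \<in> X" "y \<notin> closure {f t x | t. t \<ge> 0}"
    using assms(4) unfolding minimal_def by auto
  then obtain e where "e > 0" and avoid: "\<forall>t\<ge>0. e \<le> dist (f t x) y"
    unfolding closure_approachable by (auto simp: not_less)
  define \<epsilon> where "\<epsilon> = e / 3"
  have "\<epsilon> > 0" using \<open>e > 0\<close> by (simp add: \<epsilon>_def)
  obtain M where "M > 0" and escape:
    "\<And>T. T \<ge> 0 \<Longrightarrow> \<exists>z\<in>X. dist z y < \<epsilon> \<and> (\<forall>s. M * M \<le> s \<and> s \<le> T \<longrightarrow> e - \<epsilon> \<le> dist (f s z) y)"
    using weak_reparam_gluing_escape[OF assms(3) _ \<open>x \<in> X\<close> \<open>y \<in> X\<close> avoid \<open>\<epsilon> > 0\<close>]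
      flow_or_semiflow_at_0[OF assms(2)] by blast
  have "M * M > 0" using \<open>M > 0\<close> by simp
  have "\<exists>z\<in>X. dist z y \<le> \<epsilon> \<and> (\<forall>s. M * M \<le> s \<and> s \<le> real n \<longrightarrow> e - \<epsilon> \<le> dist (f s z) y)"
    for n :: nat
    using escape[of "real n"] by (auto intro: less_imp_le)
  then obtain l where "l \<in> X" "dist l y \<le> \<epsilon>" and far: "\<And>s. s \<ge> M * M \<Longrightarrow> e - \<epsilon> \<le> dist (f s l) y"
    using compact_escaping_limit_point[OF assms(1), of "M * M" f y \<epsilon> "e - \<epsilon>"]
      flow_or_semiflow_continuous_on[OF assms(2)] \<open>M * M > 0\<close> by auto
  have "\<epsilon> \<le> dist (f t l) l" if "t \<ge> M * M" for t
    using far[OF that] \<open>dist l y \<le> \<epsilon>\<close> dist_triangle[of "f t l" y l]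
    by (simp add: \<epsilon>_def dist_commute)
  then show ?thesis using \<open>l \<in> X\<close> \<open>\<epsilon> > 0\<close> \<open>M * M > 0\<close> by blast
qed

end
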